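(* Let $m_1(j)$, $m_2(j)$ ($j\in\mathbb{N}_0$) be sequences of nonzero numbers for which there exist polynomials $p_1,p_2$, not identically zero, and $c>0$ with $p_1(j)m_1(j)=p_2(j)m_2(j)c^j$ for every $j$. Let $k>0$, $d\in\mathbb{R}$, let $(a_j)$ be a sequence of complex numbers, and let $\widehat F_i(t)=\sum_{j=0}^\infty\frac{a_j}{m_i(j)}t^j$ for $i=1,2$. Then $F_1(t)\in\mathcal{O}^k(\widehat S_d)$ if and only if $F_2(t)\in\mathcal{O}^k(\widehat S_d)$.
   Context: Sectors: $S_d(\varepsilon)$ is the set of $t=\rho e^{i\theta}$ in the universal covering of $\mathbb{C}\setminus\{0\}$ with $\rho>0$, $|\theta-d|<\varepsilon/2$; disc-sector $\widehat S_d(\varepsilon;r_1)=S_d(\varepsilon)\cup\{|t|<r_1\}$; $\widehat S_d$ denotes a disc-sector in direction $d$ with some unspecified $\varepsilon,r_1>0$. $\mathcal{O}^k(\widehat S_d(\varepsilon;r_1))$ is the space of holomorphic $F$ on $\widehat S_d(\varepsilon;r_1)$ such that for all $\tilde\varepsilon<\varepsilon$, $\tilde r_1<r_1$ there are $A,B$ with $|F(t)|\le Ae^{B|t|^k}$ on $\widehat S_d(\tilde\varepsilon;\tilde r_1)$. The statement "$F_i\in\mathcal{O}^k(\widehat S_d)$" means that the formal series $\widehat F_i$ converges near $t=0$ and its sum $F_i$ extends to a function in $\mathcal{O}^k(\widehat S_d)$ for some disc-sector $\widehat S_d$. *)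

theory Defs
  imports "HOL-Analysis.Analysis" "HOL-Computational_Algebra.Polynomial"
begin

text \<open>Points of the sector S_d(eps) in the universal covering of C minus 0 are represented
  by logarithmic coordinates w = ln rho + i theta, i.e. the strip |Im w - d| < eps/2;
  the covering projection is exp.  A holomorphic function on the disc-sector
  S_d(eps) union {|t| < r1} is a pair (G, H): G holomorphic on the disc, H holomorphic on
  the strip (F in log coordinates), glued on the overlap (points of the sector with
  modulus < r1).\<close>

definition log_sector :: "real \<Rightarrow> real \<Rightarrow> complex set" where
  "log_sector d eps = {w. \<bar>Im w - d\<bar> < eps / 2}"

definition in_O_disc_sector ::
  "real \<Rightarrow> real \<Rightarrow> real \<Rightarrow> real \<Rightarrow> (complex \<Rightarrow> complex) \<Rightarrow> (complex \<Rightarrow> complex) \<Rightarrow> bool" where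
  "in_O_disc_sector k d eps r1 G H \<longleftrightarrow>
     G holomorphic_on ball 0 r1 \<and>
     H holomorphic_on log_sector d eps \<and>
     (\<forall>w \<in> log_sector d eps. Re w < ln r1 \<longrightarrow> H w = G (exp w)) \<and>
     (\<forall>eps' r1'. eps' < eps \<and> r1' < r1 \<longrightarrow>
        (\<exists>A B. (\<forall>z. norm z < r1' \<longrightarrow> norm (G z) \<le> A * exp (B * norm z powr k)) \<and>
               (\<forall>w \<in> log_sector d eps'. norm (H w) \<le> A * exp (B * exp (k * Re w)))))"

definition series_in_Ok :: "real \<Rightarrow> real \<Rightarrow> (nat \<Rightarrow> complex) \<Rightarrow> bool" where
  "series_in_Ok k d b \<longleftrightarrow>
     (\<exists>eps > 0. \<exists>r1 > 0. \<exists>G H.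
        in_O_disc_sector k d eps r1 G H \<and>
        (\<exists>r > 0. \<forall>z \<in> ball 0 r. (\<lambda>j. b j * z ^ j) sums G z))"

end

theory Submission
  imports Defs "HOL-Complex_Analysis.Complex_Analysis"
    "HOL-Computational_Algebra.Fundamental_Theorem_Algebra"
begin

text \<open>Call a coefficient sequence admissible if its power series lies in O^k of a
  disc-sector in direction d. Admissible sequences form a vector space containing the
  finitely supported ones, and they are stable under b_j -> c^j b_j (substituting c t),
  under b_j -> j b_j (the Euler operator t d/dt, bounded on a narrower sector by Cauchy's
  estimate) and under b_j -> b_j / (j - alpha) (solving t G' - alpha G = F, which in the
  logarithmic coordinate is K' = alpha K + H and is bounded by Gronwall's inequality along
  horizontal segments). Factoring polynomials over C, admissibility is preserved by
  multiplication with q(j) c^j and, up to finitely many indices, by division by p(j); the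
  hypothesis writes a_j / m2(j) in this form in terms of a_j / m1(j), and vice versa.\<close>

text \<open>Exponential growth of order \<open>k\<close> on every proper subsector; in the logarithmic
  coordinate \<open>|t|\<^sup>k = exp (k Re w)\<close>.\<close>
definition of_exp_order :: "real \<Rightarrow> real \<Rightarrow> real \<Rightarrow> (complex \<Rightarrow> complex) \<Rightarrow> bool" where
  "of_exp_order k d eps H \<longleftrightarrow>
     (\<forall>eps' < eps. \<exists>A \<ge> 0. \<exists>B \<ge> 0.
        \<forall>w \<in> log_sector d eps'. norm (H w) \<le> A * exp (B * exp (k * Re w)))"

lemma of_exp_orderI:
  assumes "\<And>eps'. eps' < eps \<Longrightarrow>
    \<exists>A B. \<forall>w \<in> log_sector d eps'. norm (H w) \<le> A * exp (B * exp (k * Re w))"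
  shows "of_exp_order k d eps H"
  unfolding of_exp_order_def
proof (intro allI impI)
  fix eps' :: real
  assume "eps' < eps"
  then obtain A B where AB: "\<And>w. w \<in> log_sector d eps' \<Longrightarrow> norm (H w) \<le> A * exp (B * exp (k * Re w))"
    using assms by blast
  have "norm (H w) \<le> max A 0 * exp (max B 0 * exp (k * Re w))" if "w \<in> log_sector d eps'" for w
  proof -
    have "A * exp (B * exp (k * Re w)) \<le> max A 0 * exp (max B 0 * exp (k * Re w))"
      by (intro mult_mono) (auto intro: mult_right_mono)
    with AB[OF that] show ?thesis by linarith
  qed
  then show "\<exists>A\<ge>0. \<exists>B\<ge>0. \<forall>w\<in>log_sector d eps'. norm (H w) \<le> A * exp (B * exp (k * Re w))"
    by (metis max.cobounded2)
qed

lemma of_exp_orderE: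
  assumes "of_exp_order k d eps H" "eps' < eps"
  obtains A B where "0 \<le> A" "0 \<le> B"
    "\<And>w. w \<in> log_sector d eps' \<Longrightarrow> norm (H w) \<le> A * exp (B * exp (k * Re w))"
  using assms unfolding of_exp_order_def by blast

lemma exp_bound_mono:
  fixes A B k x y :: real
  assumes "0 \<le> A" "0 \<le> B" "0 \<le> k" "x \<le> y"
  shows "A * exp (B * exp (k * x)) \<le> A * exp (B * exp (k * y))"
  using assms by (intro mult_left_mono) (auto intro!: mult_left_mono)

text \<open>Tangent line of \<open>exp\<close> at \<open>ln (g / k)\<close>: \<open>g x \<le> exp (k x) + const\<close>.\<close>
lemma exp_le_exp_exp:
  fixes g k :: real
  assumes "0 \<le> g" "0 < k"
  obtains C where "\<And>x. exp (g * x) \<le> C * exp (exp (k * x))"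
proof (cases "g = 0")
  case True
  then show ?thesis by (intro that[of 1]) simp
next
  case False
  define a where "a = g / k"
  have a: "0 < a" using assms False by (simp add: a_def)
  have "g * x \<le> a * (ln a - 1) + exp (k * x)" for x
  proof -
    have "1 + (k * x - ln a) \<le> exp (k * x - ln a)" by (rule exp_ge_add_one_self)
    also have "\<dots> = exp (k * x) / a" using a by (simp add: exp_diff)
    finally have "a * (1 + (k * x - ln a)) \<le> exp (k * x)" using a by (simp add: field_simps)
    then show ?thesis using assms by (simp add: a_def field_simps)
  qed
  then show ?thesis
    by (intro that[of "exp (a * (ln a - 1))"]) (simp flip: exp_add)
qed

lemma mem_log_sector: "w \<in> log_sector d e \<longleftrightarrow> \<bar>Im w - d\<bar> < e / 2"
  by (simp add: log_sector_def)

lemma open_log_sector: "open (log_sector d e)"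
  unfolding log_sector_def by (intro open_Collect_less continuous_intros)

lemma convex_log_sector: "convex (log_sector d e)"
proof -
  have "log_sector d e = {w. Im w < d + e / 2} \<inter> {w. Im w > d - e / 2}"
    unfolding log_sector_def by (rule set_eqI) (simp only: mem_Collect_eq Int_iff abs_less_iff; linarith)
  then show ?thesis by (simp add: convex_Int convex_halfspace_Im_lt convex_halfspace_Im_gt)
qed

lemma log_sector_mono: "e \<le> e' \<Longrightarrow> log_sector d e \<subseteq> log_sector d e'"
  by (auto simp: log_sector_def)

lemma cball_subset_log_sector:
  assumes "w \<in> log_sector d e" "e + 2 * \<delta> \<le> e'"
  shows "cball w \<delta> \<subseteq> log_sector d e'"
proof
  fix s assume "s \<in> cball w \<delta>"
  then have "\<bar>Im s - Im w\<bar> \<le> \<delta>"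
    using abs_Im_le_cmod[of "s - w"] by (simp add: dist_norm norm_minus_commute)
  with assms show "s \<in> log_sector d e'" unfolding mem_log_sector by arith
qed

lemma exp_in_ball: "0 < r \<Longrightarrow> Re w < ln r \<Longrightarrow> exp w \<in> ball 0 r"
  by (simp add: dist_norm ln_less_cancel_iff[symmetric] del: ln_less_cancel_iff)

lemma holomorphic_on_ball_bounded:
  assumes "G holomorphic_on ball 0 r" "\<rho> < r"
  obtains M where "\<And>z. norm z \<le> \<rho> \<Longrightarrow> norm (G z) \<le> M"
proof -
  have "cball 0 \<rho> \<subseteq> ball 0 r" using assms(2) by auto
  then have "compact (G ` cball 0 \<rho>)"
    using assms(1) by (intro compact_continuous_image holomorphic_on_imp_continuous_on) auto
  then show ?thesis
    using that by (fastforce dest: compact_imp_bounded simp: bounded_iff)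
qed

lemma series_in_OkI:
  assumes "0 < eps" "0 < r"
    and G: "G holomorphic_on ball 0 r" and H: "H holomorphic_on log_sector d eps"
    and glue: "\<And>w. w \<in> log_sector d eps \<Longrightarrow> Re w < ln r \<Longrightarrow> H w = G (exp w)"
    and growth: "of_exp_order k d eps H"
    and sums: "\<And>z. z \<in> ball 0 r \<Longrightarrow> (\<lambda>j. b j * z ^ j) sums G z"
  shows "series_in_Ok k d b"
proof -
  have "in_O_disc_sector k d eps r G H"
    unfolding in_O_disc_sector_def
  proof (intro conjI G H ballI impI allI glue, assumption+)
    fix eps' r' assume "eps' < eps \<and> r' < r"
    then obtain A B where "0 \<le> A" "0 \<le> B"
      and AB: "\<And>w. w \<in> log_sector d eps' \<Longrightarrow> norm (H w) \<le> A * exp (B * exp (k * Re w))"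
      using of_exp_orderE[OF growth] by blast
    obtain M where M: "\<And>z. norm z \<le> r' \<Longrightarrow> norm (G z) \<le> M"
      using G \<open>eps' < eps \<and> r' < r\<close> holomorphic_on_ball_bounded by blast
    show "\<exists>A B. (\<forall>z. norm z < r' \<longrightarrow> norm (G z) \<le> A * exp (B * norm z powr k)) \<and>
                (\<forall>w \<in> log_sector d eps'. norm (H w) \<le> A * exp (B * exp (k * Re w)))"
    proof (intro exI conjI allI impI ballI)
      fix z :: complex assume "norm z < r'"
      then have "norm (G z) \<le> max M A" using M[of z] by (simp add: le_max_iff_disj)
      also have "\<dots> \<le> max M A * exp (B * norm z powr k)"
        using \<open>0 \<le> A\<close> \<open>0 \<le> B\<close> by (simp add: mult_le_cancel_left1)
      finally show "norm (G z) \<le> max M A * exp (B * norm z powr k)" .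
    next
      fix w assume "w \<in> log_sector d eps'"
      then show "norm (H w) \<le> max M A * exp (B * exp (k * Re w))"
        using AB by (smt (verit) exp_gt_zero mult_right_mono)
    qed
  qed
  with assms show ?thesis unfolding series_in_Ok_def by blast
qed

lemma series_in_OkE:
  assumes "series_in_Ok k d b"
  obtains eps r G H where "0 < eps" "0 < r"
    "G holomorphic_on ball 0 r" "H holomorphic_on log_sector d eps"
    "\<And>w. w \<in> log_sector d eps \<Longrightarrow> Re w < ln r \<Longrightarrow> H w = G (exp w)"
    "of_exp_order k d eps H"
    "\<And>z. z \<in> ball 0 r \<Longrightarrow> (\<lambda>j. b j * z ^ j) sums G z"
proof -
  obtain eps r1 G H r where "0 < eps" "0 < r1" "0 < r" and I: "in_O_disc_sector k d eps r1 G H"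
    and sums: "\<forall>z \<in> ball 0 r. (\<lambda>j. b j * z ^ j) sums G z"
    using assms unfolding series_in_Ok_def by blast
  show ?thesis
  proof (rule that[of eps "min r1 r" G H])
    show "G holomorphic_on ball 0 (min r1 r)"
      using I unfolding in_O_disc_sector_def by (auto intro: holomorphic_on_subset)
    have "ln (min r1 r) \<le> ln r1" using \<open>0 < r1\<close> \<open>0 < r\<close> by simp
    then show "H w = G (exp w)" if "w \<in> log_sector d eps" "Re w < ln (min r1 r)" for w
      using I that unfolding in_O_disc_sector_def by auto
    show "of_exp_order k d eps H"
      using I \<open>0 < r1\<close> unfolding in_O_disc_sector_def by (intro of_exp_orderI) blast
  qed (use \<open>0 < eps\<close> \<open>0 < r1\<close> \<open>0 < r\<close> I sums in \<open>auto simp: in_O_disc_sector_def\<close>)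
qed

lemma of_exp_order_cmult:
  assumes "of_exp_order k d eps H"
  shows "of_exp_order k d eps (\<lambda>w. v * H w)"
proof (rule of_exp_orderI)
  fix eps' assume "eps' < eps"
  then obtain A B
    where AB: "\<And>w. w \<in> log_sector d eps' \<Longrightarrow> norm (H w) \<le> A * exp (B * exp (k * Re w))"
    using of_exp_orderE[OF assms] by blast
  then show "\<exists>A B. \<forall>w\<in>log_sector d eps'. norm (v * H w) \<le> A * exp (B * exp (k * Re w))"
    by (intro exI[of _ "norm v * A"] exI[of _ B])
      (auto simp: norm_mult mult.assoc intro: mult_left_mono)
qed

lemma of_exp_order_add:
  assumes "of_exp_order k d eps1 H1" "of_exp_order k d eps2 H2"
  shows "of_exp_order k d (min eps1 eps2) (\<lambda>w. H1 w + H2 w)"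
proof (rule of_exp_orderI)
  fix eps' assume "eps' < min eps1 eps2"
  then have "eps' < eps1" "eps' < eps2" by simp_all
  obtain A1 B1 where "0 \<le> A1" "0 \<le> B1"
    and AB1: "\<And>w. w \<in> log_sector d eps' \<Longrightarrow> norm (H1 w) \<le> A1 * exp (B1 * exp (k * Re w))"
    using of_exp_orderE[OF assms(1) \<open>eps' < eps1\<close>] by blast
  obtain A2 B2 where "0 \<le> A2" "0 \<le> B2"
    and AB2: "\<And>w. w \<in> log_sector d eps' \<Longrightarrow> norm (H2 w) \<le> A2 * exp (B2 * exp (k * Re w))"
    using of_exp_orderE[OF assms(2) \<open>eps' < eps2\<close>] by blast
  have "norm (H1 w + H2 w) \<le> (A1 + A2) * exp (max B1 B2 * exp (k * Re w))"
    if "w \<in> log_sector d eps'" for w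
  proof -
    have "A1 * exp (B1 * exp (k * Re w)) \<le> A1 * exp (max B1 B2 * exp (k * Re w))"
      "A2 * exp (B2 * exp (k * Re w)) \<le> A2 * exp (max B1 B2 * exp (k * Re w))"
      using \<open>0 \<le> A1\<close> \<open>0 \<le> A2\<close> by (auto intro!: mult_left_mono mult_right_mono)
    with AB1[OF that] AB2[OF that] norm_triangle_ineq[of "H1 w" "H2 w"] show ?thesis
      by (simp add: distrib_right)
  qed
  then show "\<exists>A B. \<forall>w\<in>log_sector d eps'. norm (H1 w + H2 w) \<le> A * exp (B * exp (k * Re w))"
    by blast
qed

lemma of_exp_order_shift:
  assumes "of_exp_order k d eps H"
  shows "of_exp_order k d eps (\<lambda>w. H (w + of_real x))"
proof (rule of_exp_orderI)
  fix eps' assume "eps' < eps"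
  then obtain A B
    where AB: "\<And>w. w \<in> log_sector d eps' \<Longrightarrow> norm (H w) \<le> A * exp (B * exp (k * Re w))"
    using of_exp_orderE[OF assms] by blast
  have "norm (H (w + of_real x)) \<le> A * exp (B * exp (k * x) * exp (k * Re w))"
    if "w \<in> log_sector d eps'" for w
    using AB[of "w + of_real x"] that
    by (simp add: mem_log_sector distrib_left exp_add mult_ac)
  then show "\<exists>A B. \<forall>w\<in>log_sector d eps'. norm (H (w + of_real x)) \<le> A * exp (B * exp (k * Re w))"
    by blast
qed

lemma of_exp_order_exp:
  assumes "0 < k"
  shows "of_exp_order k d eps (\<lambda>w. exp (of_nat n * w))"
proof (rule of_exp_orderI)
  obtain C where "\<And>x. exp (of_nat n * x) \<le> C * exp (exp (k * x))"
    using exp_le_exp_exp[of "of_nat n" k] assms by auto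
  then show "\<exists>A B. \<forall>w\<in>log_sector d eps'. norm (exp (of_nat n * w)) \<le> A * exp (B * exp (k * Re w))"
    for eps' by (intro exI[of _ C] exI[of _ 1]) simp
qed

lemma series_in_Ok_cmult:
  assumes "series_in_Ok k d b"
  shows "series_in_Ok k d (\<lambda>j. v * b j)"
proof -
  from assms obtain eps r G H where "0 < eps" "0 < r"
    "G holomorphic_on ball 0 r" "H holomorphic_on log_sector d eps"
    "\<And>w. w \<in> log_sector d eps \<Longrightarrow> Re w < ln r \<Longrightarrow> H w = G (exp w)"
    "of_exp_order k d eps H" "\<And>z. z \<in> ball 0 r \<Longrightarrow> (\<lambda>j. b j * z ^ j) sums G z"
    using series_in_OkE by blast
  then show ?thesis
    by (intro series_in_OkI[of eps r "\<lambda>z. v * G z" "\<lambda>w. v * H w"])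
      (auto intro: holomorphic_intros of_exp_order_cmult simp: mult.assoc dest: sums_mult)
qed

lemma series_in_Ok_add:
  assumes "series_in_Ok k d b1" "series_in_Ok k d b2"
  shows "series_in_Ok k d (\<lambda>j. b1 j + b2 j)"
proof -
  from assms(1) obtain eps1 r1 G1 H1 where "0 < eps1" "0 < r1"
    and G1: "G1 holomorphic_on ball 0 r1" and H1: "H1 holomorphic_on log_sector d eps1"
    and glue1: "\<And>w. w \<in> log_sector d eps1 \<Longrightarrow> Re w < ln r1 \<Longrightarrow> H1 w = G1 (exp w)"
    and growth1: "of_exp_order k d eps1 H1"
    and sums1: "\<And>z. z \<in> ball 0 r1 \<Longrightarrow> (\<lambda>j. b1 j * z ^ j) sums G1 z"
    using series_in_OkE by blast
  from assms(2) obtain eps2 r2 G2 H2 where "0 < eps2" "0 < r2"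
    and G2: "G2 holomorphic_on ball 0 r2" and H2: "H2 holomorphic_on log_sector d eps2"
    and glue2: "\<And>w. w \<in> log_sector d eps2 \<Longrightarrow> Re w < ln r2 \<Longrightarrow> H2 w = G2 (exp w)"
    and growth2: "of_exp_order k d eps2 H2"
    and sums2: "\<And>z. z \<in> ball 0 r2 \<Longrightarrow> (\<lambda>j. b2 j * z ^ j) sums G2 z"
    using series_in_OkE by blast
  have sectors: "log_sector d (min eps1 eps2) \<subseteq> log_sector d eps1"
    "log_sector d (min eps1 eps2) \<subseteq> log_sector d eps2"
    by (simp_all add: log_sector_mono)
  have "ln (min r1 r2) \<le> ln r1" "ln (min r1 r2) \<le> ln r2"
    using \<open>0 < r1\<close> \<open>0 < r2\<close> by auto
  show ?thesis
  proof (rule series_in_OkI[of "min eps1 eps2" "min r1 r2" "\<lambda>z. G1 z + G2 z" "\<lambda>w. H1 w + H2 w"])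
    show "(\<lambda>z. G1 z + G2 z) holomorphic_on ball 0 (min r1 r2)"
      using G1 G2 by (intro holomorphic_intros) auto
    show "(\<lambda>w. H1 w + H2 w) holomorphic_on log_sector d (min eps1 eps2)"
      using H1 H2 sectors by (intro holomorphic_intros) auto
    show "H1 w + H2 w = G1 (exp w) + G2 (exp w)"
      if "w \<in> log_sector d (min eps1 eps2)" "Re w < ln (min r1 r2)" for w
      using that sectors \<open>ln (min r1 r2) \<le> ln r1\<close> \<open>ln (min r1 r2) \<le> ln r2\<close> glue1 glue2
      by (metis in_mono order_less_le_trans)
    show "(\<lambda>j. (b1 j + b2 j) * z ^ j) sums (G1 z + G2 z)" if "z \<in> ball 0 (min r1 r2)" for z
      using sums_add[OF sums1 sums2] that by (simp add: distrib_right)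
  qed (use \<open>0 < eps1\<close> \<open>0 < eps2\<close> \<open>0 < r1\<close> \<open>0 < r2\<close> growth1 growth2 in
    \<open>auto intro: of_exp_order_add\<close>)
qed

lemma series_in_Ok_monomial:
  assumes "0 < k"
  shows "series_in_Ok k d (\<lambda>j. if j = n then v else 0)"
proof (rule series_in_OkI[of 1 1 "\<lambda>z. v * z ^ n" "\<lambda>w. v * exp (of_nat n * w)"])
  show "of_exp_order k d 1 (\<lambda>w. v * exp (of_nat n * w))"
    by (intro of_exp_order_cmult of_exp_order_exp assms)
  show "(\<lambda>j. (if j = n then v else 0) * z ^ j) sums (v * z ^ n)" for z :: complex
  proof -
    have "(\<lambda>j. (if j = n then v else 0) * z ^ j) = (\<lambda>j. if j = n then v * z ^ j else 0)"
      by auto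
    then show ?thesis using sums_single[of n "\<lambda>j. v * z ^ j"] by simp
  qed
qed (auto intro!: holomorphic_intros simp: exp_of_nat_mult)

lemma series_in_Ok_finite_change:
  assumes "0 < k" "finite S" "series_in_Ok k d b" "\<And>j. j \<notin> S \<Longrightarrow> b' j = b j"
  shows "series_in_Ok k d b'"
  using assms(2,4)
proof (induction S arbitrary: b' rule: finite_induct)
  case empty
  then have "b' = b" by auto
  with assms(3) show ?case by simp
next
  case (insert n S)
  have "series_in_Ok k d (b'(n := b n))"
    using insert.IH insert.prems by simp
  then have "series_in_Ok k d (\<lambda>j. (b'(n := b n)) j + (if j = n then b' n - b n else 0))"
    by (intro series_in_Ok_add series_in_Ok_monomial assms(1))
  moreover have "(\<lambda>j. (b'(n := b n)) j + (if j = n then b' n - b n else 0)) = b'"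
    by auto
  ultimately show ?case by simp
qed

lemma series_in_Ok_scale:
  assumes "0 < l" "series_in_Ok k d b"
  shows "series_in_Ok k d (\<lambda>j. b j * of_real l ^ j)"
proof -
  from assms(2) obtain eps r G H where "0 < eps" "0 < r"
    and G: "G holomorphic_on ball 0 r" and H: "H holomorphic_on log_sector d eps"
    and glue: "\<And>w. w \<in> log_sector d eps \<Longrightarrow> Re w < ln r \<Longrightarrow> H w = G (exp w)"
    and growth: "of_exp_order k d eps H"
    and sums: "\<And>z. z \<in> ball 0 r \<Longrightarrow> (\<lambda>j. b j * z ^ j) sums G z"
    using series_in_OkE by blast
  have ball_scaled: "of_real l * z \<in> ball 0 r" if "z \<in> ball 0 (r / l)" for z :: complex
    using that \<open>0 < l\<close> by (simp add: dist_0_norm norm_mult field_simps)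
  have shift_sector: "w + of_real (ln l) \<in> log_sector d eps" if "w \<in> log_sector d eps" for w
    using that by (simp add: mem_log_sector)
  show ?thesis
  proof (rule series_in_OkI[of eps "r / l" "\<lambda>z. G (of_real l * z)" "\<lambda>w. H (w + of_real (ln l))"])
    show "(\<lambda>z. G (of_real l * z)) holomorphic_on ball 0 (r / l)"
      using ball_scaled by (intro holomorphic_on_compose_gen[OF _ G, unfolded o_def])
        (auto intro: holomorphic_intros)
    show "(\<lambda>w. H (w + of_real (ln l))) holomorphic_on log_sector d eps"
      using shift_sector by (intro holomorphic_on_compose_gen[OF _ H, unfolded o_def])
        (auto intro: holomorphic_intros)
    show "H (w + of_real (ln l)) = G (of_real l * exp w)"
      if "w \<in> log_sector d eps" "Re w < ln (r / l)" for w
      using glue[OF shift_sector[OF that(1)]] that \<open>0 < l\<close> \<open>0 < r\<close>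
      by (simp add: ln_div exp_add exp_of_real mult.commute)
    show "(\<lambda>j. b j * of_real l ^ j * z ^ j) sums G (of_real l * z)" if "z \<in> ball 0 (r / l)" for z
      using sums[OF ball_scaled[OF that]] by (simp add: power_mult_distrib mult.assoc)
  qed (use \<open>0 < eps\<close> \<open>0 < r\<close> \<open>0 < l\<close> growth in \<open>auto intro: of_exp_order_shift\<close>)
qed

lemma powser_sums_has_field_derivative:
  fixes b :: "nat \<Rightarrow> complex"
  assumes sums: "\<And>z. z \<in> ball 0 r \<Longrightarrow> (\<lambda>j. b j * z ^ j) sums G z" and "z \<in> ball 0 r"
  shows "(G has_field_derivative (\<Sum>j. diffs b j * z ^ j)) (at z)"
    and "summable (\<lambda>j. diffs b j * z ^ j)"
proof -
  have summable: "summable (\<lambda>j. b j * u ^ j)" if "norm u < r" for u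
    using sums[of u] that by (simp add: sums_iff)
  have "((\<lambda>u. \<Sum>j. b j * u ^ j) has_field_derivative (\<Sum>j. diffs b j * z ^ j)) (at z)"
    using summable \<open>z \<in> ball 0 r\<close> by (intro termdiffs_strong') auto
  then show "(G has_field_derivative (\<Sum>j. diffs b j * z ^ j)) (at z)"
    by (rule has_field_derivative_transform_within_open[OF _ open_ball \<open>z \<in> ball 0 r\<close>])
      (use sums in \<open>simp add: sums_iff\<close>)
  show "summable (\<lambda>j. diffs b j * z ^ j)"
    using summable \<open>z \<in> ball 0 r\<close> by (intro termdiff_converges[of z r]) auto
qed

lemma powser_sums_holomorphic:
  fixes b :: "nat \<Rightarrow> complex"
  assumes "\<And>z. z \<in> ball 0 r \<Longrightarrow> (\<lambda>j. b j * z ^ j) sums G z"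
  shows "G holomorphic_on ball 0 r"
  unfolding holomorphic_on_open[OF open_ball]
  using powser_sums_has_field_derivative(1)[OF assms] by blast

lemma powser_sums_euler_operator:
  fixes b :: "nat \<Rightarrow> complex"
  assumes sums: "\<And>z. z \<in> ball 0 r \<Longrightarrow> (\<lambda>j. b j * z ^ j) sums G z" and "z \<in> ball 0 r"
  shows "(\<lambda>j. of_nat j * b j * z ^ j) sums (z * deriv G z)"
proof -
  have "deriv G z = (\<Sum>j. diffs b j * z ^ j)"
    by (rule DERIV_imp_deriv[OF powser_sums_has_field_derivative(1)[OF assms]])
  then have "(\<lambda>j. z * (diffs b j * z ^ j)) sums (z * deriv G z)"
    using powser_sums_has_field_derivative(2)[OF assms] by (simp add: sums_mult summable_sums)
  moreover have "(\<lambda>j. z * (diffs b j * z ^ j)) = (\<lambda>j. of_nat (Suc j) * b (Suc j) * z ^ Suc j)"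
    by (simp add: diffs_def fun_eq_iff mult_ac)
  ultimately have "(\<lambda>j. of_nat (Suc j) * b (Suc j) * z ^ Suc j) sums (z * deriv G z)"
    by simp
  then show ?thesis
    using sums_Suc_iff[of "\<lambda>j. of_nat j * b j * z ^ j"] by simp
qed

lemma has_field_derivative_comp_exp:
  assumes "G holomorphic_on ball 0 r" "0 < r" "Re w < ln r"
  shows "((\<lambda>u. G (exp u)) has_field_derivative exp w * deriv G (exp w)) (at w)"
proof -
  have "(G has_field_derivative deriv G (exp w)) (at (exp w))"
    using assms(1) open_ball exp_in_ball[OF assms(2,3)] by (rule holomorphic_derivI)
  from DERIV_chain2[OF this DERIV_exp] show ?thesis by (simp add: mult.commute)
qed

lemma of_exp_order_deriv:
  assumes "0 < k" and H: "H holomorphic_on log_sector d eps" and growth: "of_exp_order k d eps H"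
  shows "of_exp_order k d eps (deriv H)"
proof (rule of_exp_orderI)
  fix eps' assume "eps' < eps"
  define \<delta> where "\<delta> = (eps - eps') / 4"
  have "0 < \<delta>" using \<open>eps' < eps\<close> by (simp add: \<delta>_def)
  have "eps' + 2 * \<delta> < eps" using \<open>eps' < eps\<close> unfolding \<delta>_def by (simp add: field_simps)
  then obtain A B where "0 \<le> A" "0 \<le> B"
    and AB: "\<And>w. w \<in> log_sector d (eps' + 2 * \<delta>) \<Longrightarrow> norm (H w) \<le> A * exp (B * exp (k * Re w))"
    using of_exp_orderE[OF growth] by blast
  have "norm (deriv H w) \<le> A / \<delta> * exp (B * exp (k * \<delta>) * exp (k * Re w))"
    if w: "w \<in> log_sector d eps'" for w
  proof -
    have disc: "cball w \<delta> \<subseteq> log_sector d (eps' + 2 * \<delta>)"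
      using w by (rule cball_subset_log_sector) simp
    also have "\<dots> \<subseteq> log_sector d eps"
      using \<open>eps' + 2 * \<delta> < eps\<close> by (simp add: log_sector_mono)
    finally have "H holomorphic_on cball w \<delta>" using H by (rule holomorphic_on_subset[rotated])
    moreover have "norm (H s) \<le> A * exp (B * exp (k * (Re w + \<delta>)))" if "norm (w - s) = \<delta>" for s
    proof -
      have "Re s \<le> Re w + \<delta>"
        using abs_Re_le_cmod[of "w - s"] that by simp
      then have "A * exp (B * exp (k * Re s)) \<le> A * exp (B * exp (k * (Re w + \<delta>)))"
        using \<open>0 \<le> A\<close> \<open>0 \<le> B\<close> \<open>0 < k\<close> by (intro exp_bound_mono) auto
      moreover have "s \<in> cball w \<delta>" using that by (simp add: dist_norm)
      ultimately show ?thesis using AB disc by force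
    qed
    ultimately have "norm ((deriv ^^ 1) H w) \<le> fact 1 * (A * exp (B * exp (k * (Re w + \<delta>)))) / \<delta> ^ 1"
      using \<open>0 < \<delta>\<close> by (intro Cauchy_inequality)
        (auto intro: holomorphic_on_imp_continuous_on)
    then show ?thesis by (simp add: distrib_left exp_add mult_ac)
  qed
  then show "\<exists>A B. \<forall>w\<in>log_sector d eps'. norm (deriv H w) \<le> A * exp (B * exp (k * Re w))"
    by blast
qed

lemma series_in_Ok_mult_of_nat:
  assumes "0 < k" "series_in_Ok k d b"
  shows "series_in_Ok k d (\<lambda>j. of_nat j * b j)"
proof -
  from assms(2) obtain eps r G H where "0 < eps" "0 < r"
    and G: "G holomorphic_on ball 0 r" and H: "H holomorphic_on log_sector d eps"
    and glue: "\<And>w. w \<in> log_sector d eps \<Longrightarrow> Re w < ln r \<Longrightarrow> H w = G (exp w)"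
    and growth: "of_exp_order k d eps H"
    and sums: "\<And>z. z \<in> ball 0 r \<Longrightarrow> (\<lambda>j. b j * z ^ j) sums G z"
    using series_in_OkE by blast
  show ?thesis
  proof (rule series_in_OkI[of eps r "\<lambda>z. z * deriv G z" "deriv H"])
    show "(\<lambda>z. z * deriv G z) holomorphic_on ball 0 r"
      using G by (intro holomorphic_intros) auto
    show "deriv H holomorphic_on log_sector d eps"
      using H open_log_sector by (intro holomorphic_intros)
    show "deriv H w = exp w * deriv G (exp w)"
      if "w \<in> log_sector d eps" "Re w < ln r" for w
    proof -
      define U where "U = log_sector d eps \<inter> {u. Re u < ln r}"
      have "open U" "w \<in> U"
        using that open_log_sector by (auto simp: U_def intro!: open_Int open_halfspace_Re_lt)
      have "(H has_field_derivative exp w * deriv G (exp w)) (at w)"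
        using has_field_derivative_comp_exp[OF G \<open>0 < r\<close> \<open>Re w < ln r\<close>]
        by (rule has_field_derivative_transform_within_open[OF _ \<open>open U\<close> \<open>w \<in> U\<close>])
          (simp add: U_def glue)
      then show ?thesis by (rule DERIV_imp_deriv)
    qed
    show "(\<lambda>j. of_nat j * b j * z ^ j) sums (z * deriv G z)" if "z \<in> ball 0 r" for z
      using sums that by (rule powser_sums_euler_operator)
  qed (use \<open>0 < eps\<close> \<open>0 < r\<close> assms(1) H growth in \<open>auto intro: of_exp_order_deriv\<close>)
qed

lemma powser_sums_divide_linear:
  fixes b :: "nat \<Rightarrow> complex"
  assumes sums: "\<And>z. z \<in> ball 0 r \<Longrightarrow> (\<lambda>j. b j * z ^ j) sums G z"
    and root: "\<And>j. of_nat j = \<alpha> \<Longrightarrow> b j = 0"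
  obtains G' where "\<And>z. z \<in> ball 0 r \<Longrightarrow> (\<lambda>j. b j / (of_nat j - \<alpha>) * z ^ j) sums G' z"
    "\<And>z. z \<in> ball 0 r \<Longrightarrow> z * deriv G' z - \<alpha> * G' z = G z"
proof -
  define c where "c j = b j / (of_nat j - \<alpha>)" for j
  have "summable (\<lambda>j. c j * z ^ j)" if z: "z \<in> ball 0 r" for z
  proof -
    obtain \<rho> where "norm z < \<rho>" "\<rho> < r" using z dense[of "norm z" r] by auto
    moreover have "0 \<le> \<rho>" using \<open>norm z < \<rho>\<close> norm_ge_zero[of z] by linarith
    ultimately have norm_summable: "summable (\<lambda>j. norm (b j * z ^ j))"
      using sums[of "of_real \<rho>"] by (intro powser_insidea[of b "of_real \<rho>"]) (auto simp: sums_iff)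
    have eventually_le: "eventually (\<lambda>j. norm (c j * z ^ j) \<le> norm (b j * z ^ j)) sequentially"
    proof (rule eventually_sequentiallyI)
      fix j assume "nat \<lceil>norm \<alpha>\<rceil> + 1 \<le> j"
      then have "norm \<alpha> + 1 \<le> real j"
        using real_nat_ceiling_ge[of "norm \<alpha>"] by linarith
      then have "1 \<le> norm (of_nat j - \<alpha>)"
        using norm_triangle_ineq2[of "of_nat j" \<alpha>] by simp
      then have "norm (b j) / norm (of_nat j - \<alpha>) \<le> norm (b j)"
        by (simp add: divide_le_eq mult_le_cancel_left1)
      then have "norm (c j) \<le> norm (b j)" by (simp add: c_def norm_divide)
      then show "norm (c j * z ^ j) \<le> norm (b j * z ^ j)"
        by (simp add: norm_mult mult_right_mono)
    qed
    from summable_comparison_test_ev[OF eventually_le norm_summable] show ?thesis .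
  qed
  then have sums': "(\<lambda>j. c j * z ^ j) sums (\<Sum>j. c j * z ^ j)" if "z \<in> ball 0 r" for z
    using that by (simp add: summable_sums)
  have "z * deriv (\<lambda>z. \<Sum>j. c j * z ^ j) z - \<alpha> * (\<Sum>j. c j * z ^ j) = G z"
    if "z \<in> ball 0 r" for z
  proof -
    have "(\<lambda>j. of_nat j * c j * z ^ j - \<alpha> * (c j * z ^ j)) sums
        (z * deriv (\<lambda>z. \<Sum>j. c j * z ^ j) z - \<alpha> * (\<Sum>j. c j * z ^ j))"
      using sums' that by (intro sums_diff powser_sums_euler_operator sums_mult)
    moreover have "of_nat j * c j * z ^ j - \<alpha> * (c j * z ^ j) = b j * z ^ j" for j
    proof -
      have "(of_nat j - \<alpha>) * c j = b j"
        using root[of j] by (cases "of_nat j = \<alpha>") (simp_all add: c_def)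
      then show ?thesis by (simp add: algebra_simps)
    qed
    ultimately show ?thesis using sums[OF that] sums_unique2 by simp
  qed
  with sums' show ?thesis
    by (intro that[of "\<lambda>z. \<Sum>j. c j * z ^ j"]) (simp_all add: c_def)
qed

text \<open>In the logarithmic coordinate \<open>t G' - \<alpha> G = F\<close> becomes \<open>K' = \<alpha> K + H\<close>. It is solved
  with a primitive of \<open>exp (- \<alpha> w) H w\<close>, normalised to agree with the disc solution on the
  overlap.\<close>
lemma linear_ode_on_log_sector:
  assumes "0 < r" and G': "G' holomorphic_on ball 0 r" and H: "H holomorphic_on log_sector d eps"
    and ode: "\<And>z. z \<in> ball 0 r \<Longrightarrow> z * deriv G' z - \<alpha> * G' z = G z"
    and glue: "\<And>w. w \<in> log_sector d eps \<Longrightarrow> Re w < ln r \<Longrightarrow> H w = G (exp w)"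
  obtains K where "\<And>w. w \<in> log_sector d eps \<Longrightarrow> (K has_field_derivative \<alpha> * K w + H w) (at w)"
    "\<And>w. w \<in> log_sector d eps \<Longrightarrow> Re w < ln r \<Longrightarrow> K w = G' (exp w)"
proof -
  have exp_cancel: "exp (\<alpha> * w) * (exp (- \<alpha> * w) * z) = z" for w z
    by (simp add: mult.assoc[symmetric] flip: exp_add)
  have "(\<lambda>w. exp (- \<alpha> * w) * H w) holomorphic_on log_sector d eps"
    using H by (intro holomorphic_intros)
  then obtain L
    where L0: "\<And>w. w \<in> log_sector d eps \<Longrightarrow>
      (L has_field_derivative exp (- \<alpha> * w) * H w) (at w within log_sector d eps)"
    using holomorphic_convex_primitive'[OF convex_log_sector open_log_sector] by blast
  have L: "(L has_field_derivative exp (- \<alpha> * w) * H w) (at w)"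
    if "w \<in> log_sector d eps" for w
    using L0[OF that] unfolding at_within_open[OF that open_log_sector] .
  define U where "U = log_sector d eps \<inter> {w. Re w < ln r}"
  have "((\<lambda>w. L w - exp (- \<alpha> * w) * G' (exp w)) has_field_derivative 0) (at w within U)"
    if "w \<in> U" for w
  proof -
    have w: "w \<in> log_sector d eps" "Re w < ln r" using that by (auto simp: U_def)
    have "((\<lambda>w. exp (- \<alpha> * w)) has_field_derivative - \<alpha> * exp (- \<alpha> * w)) (at w)"
      by (auto intro!: derivative_eq_intros)
    from DERIV_diff[OF L[OF w(1)] DERIV_mult[OF this has_field_derivative_comp_exp[OF G' \<open>0 < r\<close> w(2)]]]
    have "((\<lambda>w. L w - exp (- \<alpha> * w) * G' (exp w)) has_field_derivative
        exp (- \<alpha> * w) * (H w - (exp w * deriv G' (exp w) - \<alpha> * G' (exp w)))) (at w)"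
      by (simp add: algebra_simps)
    also have "H w - (exp w * deriv G' (exp w) - \<alpha> * G' (exp w)) = 0"
      using glue[OF w] ode[OF exp_in_ball[OF \<open>0 < r\<close> w(2)]] by simp
    finally show ?thesis by (simp add: has_field_derivative_at_within)
  qed
  moreover have "convex U"
    unfolding U_def by (intro convex_Int convex_log_sector convex_halfspace_Re_lt)
  ultimately have "\<exists>C. \<forall>w \<in> U. L w - exp (- \<alpha> * w) * G' (exp w) = C"
    by (intro has_field_derivative_zero_constant)
  then obtain C where C: "\<And>w. w \<in> U \<Longrightarrow> L w - exp (- \<alpha> * w) * G' (exp w) = C"
    by blast
  show ?thesis
  proof (rule that[of "\<lambda>w. exp (\<alpha> * w) * (L w - C)"])
    fix w assume "w \<in> log_sector d eps"
    have "((\<lambda>w. exp (\<alpha> * w)) has_field_derivative \<alpha> * exp (\<alpha> * w)) (at w)"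
      by (auto intro!: derivative_eq_intros)
    from DERIV_mult[OF this DERIV_diff[OF L[OF \<open>w \<in> log_sector d eps\<close>] DERIV_const[of C]]]
    show "((\<lambda>w. exp (\<alpha> * w) * (L w - C)) has_field_derivative
        \<alpha> * (exp (\<alpha> * w) * (L w - C)) + H w) (at w)"
      by (rule DERIV_cong) (simp add: algebra_simps flip: exp_add)
  next
    fix w assume "w \<in> log_sector d eps" "Re w < ln r"
    then have "w \<in> U" by (simp add: U_def)
    then have "L w - C = exp (- \<alpha> * w) * G' (exp w)"
      by (simp flip: C)
    then show "exp (\<alpha> * w) * (L w - C) = G' (exp w)"
      by (simp only: exp_cancel)
  qed
qed

text \<open>Gronwall's estimate: \<open>exp (\<alpha> (w - s)) K s\<close> has derivative \<open>exp (\<alpha> (w - s)) h s\<close>.\<close>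
lemma norm_linear_ode_le:
  fixes K h :: "complex \<Rightarrow> complex"
  assumes K': "\<And>s. s \<in> closed_segment w0 w \<Longrightarrow> (K has_field_derivative \<alpha> * K s + h s) (at s)"
    and h: "\<And>s. s \<in> closed_segment w0 w \<Longrightarrow> norm (h s) \<le> M"
  shows "norm (K w) \<le> exp (norm \<alpha> * norm (w - w0)) * (norm (K w0) + M * norm (w - w0))"
proof -
  define E where "E s = exp (\<alpha> * (w - s)) * K s" for s
  have exp_bound: "norm (exp (\<alpha> * (w - s))) \<le> exp (norm \<alpha> * norm (w - w0))"
    if "s \<in> closed_segment w0 w" for s
  proof -
    have "norm (exp (\<alpha> * (w - s))) \<le> exp (norm \<alpha> * norm (w - s))"
      using norm_exp[of "\<alpha> * (w - s)"] by (simp add: norm_mult)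
    also have "\<dots> \<le> exp (norm \<alpha> * norm (w - w0))"
      using segment_bound(2)[OF that] by (simp add: norm_minus_commute mult_left_mono)
    finally show ?thesis .
  qed
  have "(E has_field_derivative exp (\<alpha> * (w - s)) * h s) (at s within closed_segment w0 w)"
    if "s \<in> closed_segment w0 w" for s
  proof -
    have "((\<lambda>s. exp (\<alpha> * (w - s))) has_field_derivative - \<alpha> * exp (\<alpha> * (w - s))) (at s)"
      by (auto intro!: derivative_eq_intros)
    from DERIV_mult[OF this K'[OF that]]
    have "(E has_field_derivative exp (\<alpha> * (w - s)) * h s) (at s)"
      unfolding E_def by (rule DERIV_cong) (simp add: algebra_simps)
    then show ?thesis by (rule has_field_derivative_at_within)
  qed
  moreover have "norm (exp (\<alpha> * (w - s)) * h s) \<le> exp (norm \<alpha> * norm (w - w0)) * M"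
    if "s \<in> closed_segment w0 w" for s
    unfolding norm_mult by (rule mult_mono[OF exp_bound[OF that] h[OF that]]) simp_all
  ultimately have "norm (E w - E w0) \<le> exp (norm \<alpha> * norm (w - w0)) * M * norm (w - w0)"
    by (intro field_differentiable_bound[OF convex_closed_segment]) auto
  moreover have "norm (E w0) \<le> exp (norm \<alpha> * norm (w - w0)) * norm (K w0)"
    using exp_bound[of w0] by (simp add: E_def norm_mult mult_right_mono)
  moreover have "norm (K w) \<le> norm (E w0) + norm (E w - E w0)"
    using norm_triangle_ineq[of "E w0" "E w - E w0"] by (simp add: E_def)
  ultimately show ?thesis by (simp add: distrib_left mult.assoc)
qed

lemma of_exp_order_linear_ode:
  assumes "0 < k"
    and K': "\<And>w. w \<in> log_sector d eps \<Longrightarrow> (K has_field_derivative \<alpha> * K w + H w) (at w)"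
    and growth: "of_exp_order k d eps H"
    and left: "\<And>w. w \<in> log_sector d eps \<Longrightarrow> Re w \<le> x0 \<Longrightarrow> norm (K w) \<le> M"
  shows "of_exp_order k d eps K"
proof (rule of_exp_orderI)
  fix eps' assume "eps' < eps"
  then obtain A B where "0 \<le> A" "0 \<le> B"
    and AB: "\<And>w. w \<in> log_sector d eps' \<Longrightarrow> norm (H w) \<le> A * exp (B * exp (k * Re w))"
    using of_exp_orderE[OF growth] by blast
  have sector: "log_sector d eps' \<subseteq> log_sector d eps"
    using \<open>eps' < eps\<close> by (simp add: log_sector_mono)
  define \<beta> where "\<beta> = norm \<alpha> + 1"
  obtain C where C: "\<And>x. exp (\<beta> * x) \<le> C * exp (exp (k * x))"
    using exp_le_exp_exp[of \<beta> k] \<open>0 < k\<close> by (auto simp: \<beta>_def)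
  have "0 < C * exp 1" using C[of 0] by simp
  then have "0 < C" by (simp add: zero_less_mult_iff)
  define M' where "M' = max M 0"
  define A' where "A' = M' + (M' + A) * exp (- \<beta> * x0) * C"
  have "norm (K w) \<le> A' * exp ((B + 1) * exp (k * Re w))" if w: "w \<in> log_sector d eps'" for w
  proof (cases "Re w \<le> x0")
    case True
    have "norm (K w) \<le> M'" using left[OF subsetD[OF sector w] True] by (simp add: M'_def)
    also have "M' \<le> A'" using \<open>0 \<le> A\<close> \<open>0 < C\<close> by (simp add: A'_def M'_def)
    also have "A' \<le> A' * exp ((B + 1) * exp (k * Re w))"
      using \<open>0 \<le> B\<close> \<open>M' \<le> A'\<close> by (simp add: mult_le_cancel_left1 M'_def)
    finally show ?thesis .
  next
    case False
    define x where "x = Re w"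
    define w0 where "w0 = Complex x0 (Im w)"
    define V where "V = exp (B * exp (k * x))"
    have "w0 \<in> log_sector d eps' \<inter> {s. Re s \<le> x}" "w \<in> log_sector d eps' \<inter> {s. Re s \<le> x}"
      using w False by (auto simp: w0_def x_def mem_log_sector)
    then have segment: "closed_segment w0 w \<subseteq> log_sector d eps' \<inter> {s. Re s \<le> x}"
      by (intro closed_segment_subset convex_Int convex_log_sector convex_halfspace_Re_le)
    have "norm (H s) \<le> A * V" if "s \<in> closed_segment w0 w" for s
      using AB[of s] exp_bound_mono[of A B k "Re s" x] segment that \<open>0 \<le> A\<close> \<open>0 \<le> B\<close> \<open>0 < k\<close>
      by (force simp: V_def)
    moreover have "norm (w - w0) = x - x0"
      using False by (simp add: w0_def x_def complex_eq_iff norm_complex_def)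
    ultimately have "norm (K w) \<le> exp (norm \<alpha> * (x - x0)) * (norm (K w0) + A * V * (x - x0))"
      using norm_linear_ode_le[of w0 w K \<alpha> H "A * V"] K' segment sector by force
    also have "\<dots> \<le> (M' + A) * V * exp (\<beta> * (x - x0))"
    proof -
      have "x - x0 \<le> exp (x - x0)" using exp_ge_add_one_self[of "x - x0"] by linarith
      moreover have "norm (K w0) \<le> M'"
        using left[of w0] \<open>w0 \<in> log_sector d eps' \<inter> {s. Re s \<le> x}\<close> sector
        by (force simp: M'_def w0_def)
      moreover have "1 \<le> V * exp (x - x0)"
        using \<open>0 \<le> B\<close> False by (simp add: V_def x_def flip: exp_add)
      then have "M' \<le> M' * (V * exp (x - x0))"
        by (simp add: mult_le_cancel_left1 M'_def)
      moreover have "0 \<le> A * V" using \<open>0 \<le> A\<close> by (simp add: V_def)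
      ultimately have "norm (K w0) + A * V * (x - x0) \<le> (M' + A) * V * exp (x - x0)"
        by (smt (verit) distrib_right mult.assoc mult_left_mono)
      then have "exp (norm \<alpha> * (x - x0)) * (norm (K w0) + A * V * (x - x0)) \<le>
          exp (norm \<alpha> * (x - x0)) * ((M' + A) * V * exp (x - x0))"
        by (rule mult_left_mono) simp
      moreover have "exp (\<beta> * (x - x0)) = exp (norm \<alpha> * (x - x0)) * exp (x - x0)"
        by (simp add: \<beta>_def distrib_right exp_add)
      ultimately show ?thesis by (simp add: mult_ac)
    qed
    also have "\<dots> = (M' + A) * exp (- \<beta> * x0) * V * exp (\<beta> * x)"
      by (simp add: algebra_simps flip: exp_add)
    also have "\<dots> \<le> (M' + A) * exp (- \<beta> * x0) * V * (C * exp (exp (k * x)))"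
      using C[of x] \<open>0 \<le> A\<close> by (intro mult_left_mono) (auto simp: M'_def V_def)
    also have "\<dots> \<le> A' * exp ((B + 1) * exp (k * x))"
      using \<open>0 \<le> A\<close> \<open>0 < C\<close> by (simp add: A'_def V_def M'_def algebra_simps mult_exp_exp)
    finally show ?thesis by (simp add: x_def)
  qed
  then show "\<exists>A B. \<forall>w\<in>log_sector d eps'. norm (K w) \<le> A * exp (B * exp (k * Re w))"
    by blast
qed

lemma finite_of_nat_preimage:
  assumes "finite (S :: 'a::semiring_char_0 set)"
  shows "finite {j::nat. of_nat j \<in> S}"
proof -
  have "finite (of_nat -` S :: nat set)"
    using assms by (rule finite_vimageI) (simp add: inj_of_nat)
  then show ?thesis by (simp only: vimage_def)
qed

lemma series_in_Ok_divide_linear: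
  assumes "0 < k" "series_in_Ok k d b"
  shows "series_in_Ok k d (\<lambda>j. b j / (of_nat j - \<alpha>))"
proof -
  define b0 where "b0 j = (if of_nat j = \<alpha> then 0 else b j)" for j
  have "finite {j. of_nat j = \<alpha>}"
    using finite_of_nat_preimage[of "{\<alpha>}"] by (simp only: singleton_iff finite.emptyI finite_insert)
  then have "series_in_Ok k d b0"
    by (rule series_in_Ok_finite_change[OF assms(1) _ assms(2)]) (simp add: b0_def)
  then obtain eps r G H where "0 < eps" "0 < r" "G holomorphic_on ball 0 r"
    and H: "H holomorphic_on log_sector d eps"
    and glue: "\<And>w. w \<in> log_sector d eps \<Longrightarrow> Re w < ln r \<Longrightarrow> H w = G (exp w)"
    and growth: "of_exp_order k d eps H"
    and sums: "\<And>z. z \<in> ball 0 r \<Longrightarrow> (\<lambda>j. b0 j * z ^ j) sums G z"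
    using series_in_OkE by blast
  obtain G' where sums': "\<And>z. z \<in> ball 0 r \<Longrightarrow> (\<lambda>j. b0 j / (of_nat j - \<alpha>) * z ^ j) sums G' z"
    and ode: "\<And>z. z \<in> ball 0 r \<Longrightarrow> z * deriv G' z - \<alpha> * G' z = G z"
    using powser_sums_divide_linear[where \<alpha> = \<alpha>, OF sums] by (auto simp: b0_def)
  have G': "G' holomorphic_on ball 0 r" using sums' by (rule powser_sums_holomorphic)
  obtain K where K': "\<And>w. w \<in> log_sector d eps \<Longrightarrow> (K has_field_derivative \<alpha> * K w + H w) (at w)"
    and glueK: "\<And>w. w \<in> log_sector d eps \<Longrightarrow> Re w < ln r \<Longrightarrow> K w = G' (exp w)"
    using linear_ode_on_log_sector[OF \<open>0 < r\<close> G' H ode glue] by blast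
  obtain M where M: "\<And>z. norm z \<le> r / 2 \<Longrightarrow> norm (G' z) \<le> M"
    using holomorphic_on_ball_bounded[OF G', of "r / 2"] \<open>0 < r\<close> by auto
  have "norm (K w) \<le> M" if "w \<in> log_sector d eps" "Re w \<le> ln (r / 2)" for w
  proof -
    have "ln (r / 2) < ln r" using \<open>0 < r\<close> by simp
    then have "K w = G' (exp w)" using that by (intro glueK) auto
    moreover have "norm (exp w) \<le> r / 2"
      using exp_le_cancel_iff[THEN iffD2, OF that(2)] \<open>0 < r\<close> by simp
    ultimately show ?thesis using M by simp
  qed
  then have growthK: "of_exp_order k d eps K"
    using of_exp_order_linear_ode[OF assms(1) K' growth] by blast
  have holoK: "K holomorphic_on log_sector d eps"
    using K' by (auto simp: holomorphic_on_open[OF open_log_sector])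
  \<comment> \<open>at \<open>j = \<alpha>\<close> both quotients are \<open>0\<close>, since division by zero yields zero\<close>
  have b0_div: "b0 j / (of_nat j - \<alpha>) = b j / (of_nat j - \<alpha>)" for j
    by (simp add: b0_def)
  have sums_b: "(\<lambda>j. b j / (of_nat j - \<alpha>) * z ^ j) sums G' z" if "z \<in> ball 0 r" for z
    using sums'[OF that] by (simp only: b0_div)
  show ?thesis
    by (rule series_in_OkI[OF \<open>0 < eps\<close> \<open>0 < r\<close> G' holoK glueK growthK sums_b])
qed

lemma series_in_Ok_mult_poly:
  assumes "0 < k" "series_in_Ok k d b"
  shows "series_in_Ok k d (\<lambda>j. poly q (of_nat j) * b j)"
proof (induction q)
  case 0
  show ?case using series_in_Ok_cmult[OF assms(2), of 0] by simp
next
  case (pCons a q)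
  have "series_in_Ok k d (\<lambda>j. a * b j + of_nat j * (poly q (of_nat j) * b j))"
    using series_in_Ok_add[OF series_in_Ok_cmult[OF assms(2)]
        series_in_Ok_mult_of_nat[OF assms(1) pCons.IH]] .
  then show ?case by (simp add: algebra_simps)
qed

lemma series_in_Ok_divide_poly:
  assumes "0 < k" "series_in_Ok k d b" "q \<noteq> 0"
  shows "series_in_Ok k d (\<lambda>j. b j / poly q (of_nat j))"
proof -
  obtain root where q: "smult (lead_coeff q) (\<Prod>i<degree q. [:- root i, 1:]) = q"
    using complex_poly_decompose' by blast
  have partial: "series_in_Ok k d (\<lambda>j. b j / (lead_coeff q * (\<Prod>i<n. (of_nat j - root i))))" for n
  proof (induction n)
    case 0
    show ?case using series_in_Ok_cmult[OF assms(2), of "1 / lead_coeff q"] by simp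
  next
    case (Suc n)
    then show ?case
      using series_in_Ok_divide_linear[OF assms(1) Suc.IH, of "root n"]
      by (simp add: divide_divide_eq_left mult.assoc)
  qed
  have poly_q: "poly q x = lead_coeff q * (\<Prod>i<degree q. (x - root i))" for x
    by (subst q[symmetric]) (simp add: poly_prod)
  show ?thesis using partial[of "degree q"] by (simp only: poly_q)
qed

lemma series_in_Ok_poly_relation:
  assumes "0 < k" "0 < c" "p \<noteq> 0" "series_in_Ok k d b"
    and relation: "\<And>j. poly p (of_nat j) * b' j = poly q (of_nat j) * of_real c ^ j * b j"
  shows "series_in_Ok k d b'"
proof -
  have "finite {j. poly p (of_nat j) = 0}"
    using finite_of_nat_preimage[OF poly_roots_finite[OF \<open>p \<noteq> 0\<close>]] by (simp only: mem_Collect_eq)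
  moreover have "series_in_Ok k d (\<lambda>j. poly q (of_nat j) * (b j * of_real c ^ j) / poly p (of_nat j))"
    using series_in_Ok_divide_poly[OF \<open>0 < k\<close> series_in_Ok_mult_poly[OF \<open>0 < k\<close>
        series_in_Ok_scale[OF \<open>0 < c\<close> \<open>series_in_Ok k d b\<close>]] \<open>p \<noteq> 0\<close>]
    by (simp add: mult.assoc)
  moreover have "b' j = poly q (of_nat j) * (b j * of_real c ^ j) / poly p (of_nat j)"
    if "j \<notin> {j. poly p (of_nat j) = 0}" for j
    using relation[of j] that by (simp add: field_simps)
  ultimately show ?thesis
    by (rule series_in_Ok_finite_change[OF \<open>0 < k\<close>])
qed

theorem proposition3:
  fixes m1 m2 a :: "nat \<Rightarrow> complex" and p1 p2 :: "complex poly" and c k d :: real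
  assumes "\<And>j. m1 j \<noteq> 0" and "\<And>j. m2 j \<noteq> 0"
    and "p1 \<noteq> 0" and "p2 \<noteq> 0" and "c > 0"
    and "\<And>j. poly p1 (of_nat j) * m1 j = poly p2 (of_nat j) * m2 j * complex_of_real c ^ j"
    and "k > 0"
  shows "series_in_Ok k d (\<lambda>j. a j / m1 j) \<longleftrightarrow> series_in_Ok k d (\<lambda>j. a j / m2 j)"
proof -
  have forward: "poly p1 (of_nat j) * (a j / m2 j) = poly p2 (of_nat j) * of_real c ^ j * (a j / m1 j)"
    for j using assms(1,2)[of j] assms(6)[of j] by (simp add: field_simps)
  have backward:
    "poly p2 (of_nat j) * (a j / m1 j) = poly p1 (of_nat j) * of_real (1 / c) ^ j * (a j / m2 j)"
    for j using assms(1,2)[of j] assms(5) assms(6)[of j] by (simp add: field_simps power_divide)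
  show ?thesis
    using series_in_Ok_poly_relation[OF assms(7,5,3) _ forward]
      series_in_Ok_poly_relation[OF assms(7) _ assms(4) _ backward] assms(5) by auto
qed

end
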